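(* Let $u$ be a half-activated vertex of a graph $G$. Then there exists a half-activated vertex of $G$ adjacent to $u$.
   Context: For a finite simple graph $G$ with vertex set $\{v_1,\dots,v_n\}$, the closed adjacency matrix $N(G)$ is the $n\times n$ matrix over $\mathbb{Z}_2$ whose $(i,j)$ entry is $1$ iff $i=j$ or $v_i$ is adjacent to $v_j$. Elements of $\operatorname{Ker}(N(G))$ are null patterns. A vertex $v$ is half-activated if $\boldsymbol{\ell}(v)=1$ for some null pattern $\boldsymbol{\ell}$. *)

theory Defs
  imports Main "HOL-Library.Z2"
begin

definition simple_graph :: "'a set \<Rightarrow> ('a \<Rightarrow> 'a \<Rightarrow> bool) \<Rightarrow> bool" where
  "simple_graph V E \<longleftrightarrow> finite V \<and> (\<forall>x y. E x y \<longrightarrow> x \<in> V \<and> y \<in> V)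
     \<and> (\<forall>x y. E x y \<longrightarrow> E y x) \<and> (\<forall>x. \<not> E x x)"

definition closed_adj :: "('a \<Rightarrow> 'a \<Rightarrow> bool) \<Rightarrow> 'a \<Rightarrow> 'a \<Rightarrow> bit" where
  "closed_adj E v w = (if v = w \<or> E v w then 1 else 0)"

definition null_pattern :: "'a set \<Rightarrow> ('a \<Rightarrow> 'a \<Rightarrow> bool) \<Rightarrow> ('a \<Rightarrow> bit) \<Rightarrow> bool" where
  "null_pattern V E l \<longleftrightarrow> (\<forall>x. x \<notin> V \<longrightarrow> l x = 0)
     \<and> (\<forall>v\<in>V. (\<Sum>w\<in>V. closed_adj E v w * l w) = 0)"

definition half_activated :: "'a set \<Rightarrow> ('a \<Rightarrow> 'a \<Rightarrow> bool) \<Rightarrow> 'a \<Rightarrow> bool" where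
  "half_activated V E v \<longleftrightarrow> v \<in> V \<and> (\<exists>l. null_pattern V E l \<and> l v = 1)"

end

theory Submission
  imports Defs
begin

text \<open>The row of \<open>N(G)\<close> at \<open>u\<close> says that \<open>l u\<close> equals the sum of \<open>l\<close> over the
  neighbours of \<open>u\<close>; so if \<open>l u = 1\<close> some neighbour carries a \<open>1\<close>, and the same
  null pattern \<open>l\<close> witnesses that this neighbour is half-activated.\<close>

lemma null_pattern_active_neighbour:
  assumes "finite V" and "null_pattern V E l" and "u \<in> V" and "l u = 1"
  shows "\<exists>w. E u w \<and> l w = 1"
proof (rule ccontr)
  assume "\<nexists>w. E u w \<and> l w = 1"
  then have "\<And>w. E u w \<Longrightarrow> l w = 0"
    by auto
  then have neighbours_vanish: "(\<Sum>w\<in>V-{u}. closed_adj E u w * l w) = 0"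
    by (intro sum.neutral) (auto simp: closed_adj_def)
  have "1 = closed_adj E u u * l u + (\<Sum>w\<in>V-{u}. closed_adj E u w * l w)"
    using assms(4) neighbours_vanish by (simp add: closed_adj_def)
  also have "\<dots> = (\<Sum>w\<in>V. closed_adj E u w * l w)"
    using assms(1,3) by (rule sum.remove[symmetric])
  also have "\<dots> = 0"
    using assms(2,3) unfolding null_pattern_def by blast
  finally show False
    by simp
qed

theorem lemma4p1:
  fixes V :: "'a set" and E :: "'a \<Rightarrow> 'a \<Rightarrow> bool" and u :: 'a
  assumes "simple_graph V E"
    and "half_activated V E u"
  shows "\<exists>w. E u w \<and> half_activated V E w"
proof -
  from assms(2) obtain l where "u \<in> V" and l: "null_pattern V E l" and "l u = 1"
    unfolding half_activated_def by blast
  moreover have "finite V"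
    using assms(1) unfolding simple_graph_def by blast
  ultimately obtain w where "E u w" and "l w = 1"
    using null_pattern_active_neighbour by metis
  moreover from this(1) have "w \<in> V"
    using assms(1) unfolding simple_graph_def by blast
  ultimately show ?thesis
    using l unfolding half_activated_def by blast
qed

end
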